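(* Let $\Theta$ be a causal theory over $\mathfrak L$. Every sequent derivable in the sequent calculus $\mathbf{S}_\Theta$ has a derivation in $\mathbf{S}_\Theta$ that does not use the multicut rule.
   Context: $\mathfrak L$ is a classical propositional language (atoms, $\neg,\wedge,\vee,\to,\top,\perp$). A causal rule is $\phi\triangleright\psi$ with $\phi,\psi\in\mathfrak L$; a causal theory $\Theta$ is a set of causal rules. $\mathcal L_\Box$ is generated by $\mathfrak L$ and a unary operator $\Box$. The sequent calculus $\mathbf S_\Theta$ derives sequents $\Gamma\vdash_\Box\Delta$ with $\Gamma,\Delta$ collections of $\mathcal L_\Box$-formulas; derivations are well-founded, possibly infinitely branching trees. Its rules: axiom $p\vdash_\Box p$; $\perp\vdash_\Box$; $\vdash_\Box\top$; left and right weakening and contraction; the classical two-sided rules: $\neg$L (from $\Gamma\vdash_\Box p,\Delta$ infer $\Gamma,\neg p\vdash_\Box\Delta$), $\neg$R (from $\Gamma,p\vdash_\Box\Delta$ infer $\Gamma\vdash_\Box\neg p,\Delta$), $\wedge$L (from $\Gamma,p,q\vdash_\Box\Delta$ infer $\Gamma,p\wedge q\vdash_\Box\Delta$), $\wedge$R (from $\Gamma\vdash_\Box p,\Delta$ and $\Gamma\vdash_\Box q,\Delta$ infer $\Gamma\vdash_\Box p\wedge q,\Delta$), $\vee$L (from $\Gamma,p\vdash_\Box\Delta$ and $\Gamma,q\vdash_\Box\Delta$ infer $\Gamma,p\vee q\vdash_\Box\Delta$), $\vee$R (from $\Gamma\vdash_\Box p,q,\Delta$ infer $\Gamma\vdash_\Box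 p\vee q,\Delta$), $\to$L (from $\Gamma\vdash_\Box p,\Delta$ and $\Gamma,q\vdash_\Box\Delta$ infer $\Gamma,p\to q\vdash_\Box\Delta$), $\to$R (from $\Gamma,p\vdash_\Box q,\Delta$ infer $\Gamma\vdash_\Box p\to q,\Delta$); $\Box$R: if $\phi_1\triangleright\psi_1,\dots,\phi_k\triangleright\psi_k\in\Theta$ and $\psi_1,\dots,\psi_k\vdash_\Box p$ is derivable, then from $\Gamma\vdash_\Box\phi_1\wedge\dots\wedge\phi_k,\Delta$ infer $\Gamma\vdash_\Box\Box p,\Delta$ (empty conjunction $=\top$); $\Box$L: letting $\{S_j\}_{j\in J}$ be the family of all finite sets $S_j\subseteq\Theta$ such that $\{\psi:\phi\triangleright\psi\in S_j\}\vdash_\Box p$ is derivable ($J$ may be infinite), from the premises $\Gamma,\{\phi:\phi\triangleright\psi\in S_j\}\vdash_\Box\Delta$ for all $j\in J$ infer $\Gamma,\Box p\vdash_\Box\Delta$; multicut: from $\Gamma\vdash_\Box p^m,\Delta$ and $\Gamma',p^n\vdash_\Box\Delta'$ ($m,n>0$, $p^n$ meaning $n$ occurrences of $p$) infer $\Gamma,\Gamma'\vdash_\Box\Delta,\Delta'$. *)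

theory Defs
  imports Main "HOL-Library.Multiset"
begin

datatype 'a fm =
    Atom 'a
  | Neg "'a fm"
  | Conj "'a fm" "'a fm"
  | Disj "'a fm" "'a fm"
  | Imp "'a fm" "'a fm"
  | Top
  | Bot
  | Box "'a fm"

fun classical :: "'a fm \<Rightarrow> bool" where
  "classical (Atom a) = True"
| "classical (Neg p) = classical p"
| "classical (Conj p q) = (classical p \<and> classical q)"
| "classical (Disj p q) = (classical p \<and> classical q)"
| "classical (Imp p q) = (classical p \<and> classical q)"
| "classical Top = True"
| "classical Bot = True"
| "classical (Box p) = False"

fun mdepth :: "'a fm \<Rightarrow> nat" where
  "mdepth (Atom a) = 0"
| "mdepth (Neg p) = mdepth p"
| "mdepth (Conj p q) = max (mdepth p) (mdepth q)"
| "mdepth (Disj p q) = max (mdepth p) (mdepth q)"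
| "mdepth (Imp p q) = max (mdepth p) (mdepth q)"
| "mdepth Top = 0"
| "mdepth Bot = 0"
| "mdepth (Box p) = Suc (mdepth p)"

text \<open>A causal rule phi |> psi is the pair (phi, psi); a causal theory is a set of
  such pairs with classical components.\<close>
type_synonym 'a crule = "'a fm \<times> 'a fm"

definition causal_theory :: "'a crule set \<Rightarrow> bool" where
  "causal_theory \<Theta> \<longleftrightarrow> (\<forall>(\<phi>, \<psi>) \<in> \<Theta>. classical \<phi> \<and> classical \<psi>)"

fun bigconj :: "'a fm list \<Rightarrow> 'a fm" where
  "bigconj [] = Top"
| "bigconj [p] = p"
| "bigconj (p # ps) = Conj p (bigconj ps)"

type_synonym 'a sequent = "'a fm multiset \<times> 'a fm multiset"

text \<open>Derivability in S_Theta, parametrised by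
  sc :  the side-condition relation (sc k s: sequent s derivable, used for Box-rules
        whose principal formula is Box p with mdepth p = k),
  ok :  which levels k = mdepth p of Box-rules may be applied,
  cut:  whether the multicut rule may be used.
  Derivations are well-founded, possibly infinitely branching (rule BoxL).\<close>
inductive deriv :: "'a crule set \<Rightarrow> (nat \<Rightarrow> 'a sequent \<Rightarrow> bool) \<Rightarrow> (nat \<Rightarrow> bool)
                     \<Rightarrow> bool \<Rightarrow> 'a sequent \<Rightarrow> bool"
  for \<Theta> sc ok cut where
  ax: "deriv \<Theta> sc ok cut ({#p#}, {#p#})"
| botL: "deriv \<Theta> sc ok cut ({#Bot#}, {#})"
| topR: "deriv \<Theta> sc ok cut ({#}, {#Top#})"
| wL: "deriv \<Theta> sc ok cut (\<Gamma>, \<Delta>) \<Longrightarrow> deriv \<Theta> sc ok cut (\<Gamma> + {#p#}, \<Delta>)"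
| wR: "deriv \<Theta> sc ok cut (\<Gamma>, \<Delta>) \<Longrightarrow> deriv \<Theta> sc ok cut (\<Gamma>, {#p#} + \<Delta>)"
| cL: "deriv \<Theta> sc ok cut (\<Gamma> + {#p, p#}, \<Delta>) \<Longrightarrow> deriv \<Theta> sc ok cut (\<Gamma> + {#p#}, \<Delta>)"
| cR: "deriv \<Theta> sc ok cut (\<Gamma>, {#p, p#} + \<Delta>) \<Longrightarrow> deriv \<Theta> sc ok cut (\<Gamma>, {#p#} + \<Delta>)"
| negL: "deriv \<Theta> sc ok cut (\<Gamma>, {#p#} + \<Delta>) \<Longrightarrow> deriv \<Theta> sc ok cut (\<Gamma> + {#Neg p#}, \<Delta>)"
| negR: "deriv \<Theta> sc ok cut (\<Gamma> + {#p#}, \<Delta>) \<Longrightarrow> deriv \<Theta> sc ok cut (\<Gamma>, {#Neg p#} + \<Delta>)"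
| conjL: "deriv \<Theta> sc ok cut (\<Gamma> + {#p, q#}, \<Delta>) \<Longrightarrow> deriv \<Theta> sc ok cut (\<Gamma> + {#Conj p q#}, \<Delta>)"
| conjR: "deriv \<Theta> sc ok cut (\<Gamma>, {#p#} + \<Delta>) \<Longrightarrow> deriv \<Theta> sc ok cut (\<Gamma>, {#q#} + \<Delta>)
          \<Longrightarrow> deriv \<Theta> sc ok cut (\<Gamma>, {#Conj p q#} + \<Delta>)"
| disjL: "deriv \<Theta> sc ok cut (\<Gamma> + {#p#}, \<Delta>) \<Longrightarrow> deriv \<Theta> sc ok cut (\<Gamma> + {#q#}, \<Delta>)
          \<Longrightarrow> deriv \<Theta> sc ok cut (\<Gamma> + {#Disj p q#}, \<Delta>)"
| disjR: "deriv \<Theta> sc ok cut (\<Gamma>, {#p, q#} + \<Delta>) \<Longrightarrow> deriv \<Theta> sc ok cut (\<Gamma>, {#Disj p q#} + \<Delta>)"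
| impL: "deriv \<Theta> sc ok cut (\<Gamma>, {#p#} + \<Delta>) \<Longrightarrow> deriv \<Theta> sc ok cut (\<Gamma> + {#q#}, \<Delta>)
          \<Longrightarrow> deriv \<Theta> sc ok cut (\<Gamma> + {#Imp p q#}, \<Delta>)"
| impR: "deriv \<Theta> sc ok cut (\<Gamma> + {#p#}, {#q#} + \<Delta>) \<Longrightarrow> deriv \<Theta> sc ok cut (\<Gamma>, {#Imp p q#} + \<Delta>)"
| boxR: "\<lbrakk> ok (mdepth p); set rs \<subseteq> \<Theta>; sc (mdepth p) (mset (map snd rs), {#p#});
           deriv \<Theta> sc ok cut (\<Gamma>, {#bigconj (map fst rs)#} + \<Delta>) \<rbrakk>
          \<Longrightarrow> deriv \<Theta> sc ok cut (\<Gamma>, {#Box p#} + \<Delta>)"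
| boxL: "\<lbrakk> ok (mdepth p);
           \<And>S. \<lbrakk> finite S; S \<subseteq> \<Theta>; sc (mdepth p) (mset_set (snd ` S), {#p#}) \<rbrakk>
              \<Longrightarrow> deriv \<Theta> sc ok cut (\<Gamma> + mset_set (fst ` S), \<Delta>) \<rbrakk>
          \<Longrightarrow> deriv \<Theta> sc ok cut (\<Gamma> + {#Box p#}, \<Delta>)"
| mcut: "\<lbrakk> cut; m > 0; n > 0;
           deriv \<Theta> sc ok cut (\<Gamma>, replicate_mset m p + \<Delta>);
           deriv \<Theta> sc ok cut (\<Gamma>' + replicate_mset n p, \<Delta>') \<rbrakk>
          \<Longrightarrow> deriv \<Theta> sc ok cut (\<Gamma> + \<Gamma>', \<Delta> + \<Delta>')"

text \<open>Stratification of the side conditions by modal depth: levels n k is the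
  derivability relation at level k (for k <= n), where level k allows Box-rules
  with principal formula Box p only when mdepth p < k, whose side conditions are
  evaluated at level mdepth p.\<close>
primrec levels :: "'a crule set \<Rightarrow> nat \<Rightarrow> nat \<Rightarrow> 'a sequent \<Rightarrow> bool" where
  "levels \<Theta> 0 = (\<lambda>k. deriv \<Theta> (\<lambda>_ _. False) (\<lambda>_. False) True)"
| "levels \<Theta> (Suc n) = (\<lambda>k. if k \<le> n then levels \<Theta> n k
                             else deriv \<Theta> (levels \<Theta> n) (\<lambda>j. j \<le> n) True)"

definition level_deriv :: "'a crule set \<Rightarrow> nat \<Rightarrow> 'a sequent \<Rightarrow> bool" where
  "level_deriv \<Theta> k = levels \<Theta> k k"

definition derivable :: "'a crule set \<Rightarrow> 'a sequent \<Rightarrow> bool" where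
  "derivable \<Theta> s = deriv \<Theta> (level_deriv \<Theta>) (\<lambda>_. True) True s"

definition cutfree_derivable :: "'a crule set \<Rightarrow> 'a sequent \<Rightarrow> bool" where
  "cutfree_derivable \<Theta> s = deriv \<Theta> (level_deriv \<Theta>) (\<lambda>_. True) False s"

end

theory Submission
  imports Defs
begin

text \<open>
  The side conditions of the Box-rules are
  a fixed relation sc (for S_Theta: derivability at the appropriate level), so they can be
  read as an oracle: Box p is true under a classical valuation v iff some finite list of
  causal rules phi_i |> psi_i with sc-derivable psi_1, ..., psi_k |- p has all phi_i true
  under v.  Validity of sequents is defined with respect to this semantics.

  (1) Soundness: every rule of the calculus, multicut included, preserves validity.
  (2) Completeness of the calculus WITHOUT multicut: by well-founded induction on (number of
      Boxes, number of symbols), valid sequents are decomposed by the invertible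
      propositional rules and the left Box-rule; what remains is a classical antecedent
      against atoms and boxes, handled by propositional compactness (proved here via a
      Lindenbaum extension) and finitely many right Box-rules.
  Both directions need only that side conditions depend on the set, not the multiset, of
  antecedent formulas, which holds for every level of S_Theta by contraction and weakening.
  The main theorem chains (1) and (2).
\<close>

section \<open>Classical valuations and compactness\<close>

text \<open>Classical truth of formulas under a valuation of the atoms; Box formulas, which
  do not occur in classical formulas, are simply false.\<close>
fun cval :: "('a \<Rightarrow> bool) \<Rightarrow> 'a fm \<Rightarrow> bool" where
  "cval v (Atom a) = v a"
| "cval v (Neg p) = (\<not> cval v p)"
| "cval v (Conj p q) = (cval v p \<and> cval v q)"
| "cval v (Disj p q) = (cval v p \<or> cval v q)"
| "cval v (Imp p q) = (cval v p \<longrightarrow> cval v q)"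
| "cval v Top = True"
| "cval v Bot = False"
| "cval v (Box p) = False"

definition fsat :: "'a fm set \<Rightarrow> bool" where
  "fsat X \<longleftrightarrow> (\<forall>F. finite F \<longrightarrow> F \<subseteq> X \<longrightarrow> (\<exists>v. \<forall>f\<in>F. cval v f))"

text \<open>Finite satisfiability has finite character, so it is preserved by unions of
  nonempty chains; this is what Zorn's lemma needs.\<close>
lemma fsat_Union_chain:
  assumes "C \<noteq> {}" "subset.chain A C" "\<forall>Y\<in>C. fsat Y"
  shows "fsat (\<Union>C)"
  unfolding fsat_def
proof (intro allI impI)
  fix F assume "finite F" "F \<subseteq> \<Union>C"
  then obtain B where "B \<in> C" "F \<subseteq> B"
    using finite_subset_Union_chain assms(1,2) by metis
  then show "\<exists>v. \<forall>f\<in>F. cval v f" using \<open>finite F\<close> assms(3) unfolding fsat_def by blast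
qed

lemma fsat_maximal_extension:
  assumes "fsat X"
  obtains M where "X \<subseteq> M" "fsat M" "\<And>\<psi>. fsat (insert \<psi> M) \<Longrightarrow> \<psi> \<in> M"
proof -
  let ?A = "{Y. X \<subseteq> Y \<and> fsat Y}"
  have "\<Union>C \<in> ?A" if "C \<noteq> {}" "subset.chain ?A C" for C
    using that fsat_Union_chain[OF that] unfolding subset.chain_def by blast
  moreover have "?A \<noteq> {}" using assms by blast
  ultimately obtain M where M: "M \<in> ?A" "\<forall>Y\<in>?A. M \<subseteq> Y \<longrightarrow> Y = M"
    using subset_Zorn_nonempty[of ?A] by blast
  have "\<psi> \<in> M" if "fsat (insert \<psi> M)" for \<psi>
  proof -
    have "insert \<psi> M \<in> ?A" using M(1) that by blast
    then show ?thesis using M(2) by blast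
  qed
  with M(1) show ?thesis using that by blast
qed

context
  fixes M :: "'a fm set"
  assumes fsat: "fsat M"
    and maximal: "\<And>\<psi>. fsat (insert \<psi> M) \<Longrightarrow> \<psi> \<in> M"
begin

lemma maximal_consistent: "finite F \<Longrightarrow> F \<subseteq> M \<Longrightarrow> \<exists>v. \<forall>f\<in>F. cval v f"
  using fsat unfolding fsat_def by blast

lemma maximal_closed:
  assumes "finite F" "F \<subseteq> M" "\<And>v. \<forall>f\<in>F. cval v f \<Longrightarrow> cval v \<psi>"
  shows "\<psi> \<in> M"
proof (rule maximal)
  show "fsat (insert \<psi> M)"
    unfolding fsat_def
  proof (intro allI impI)
    fix G assume G: "finite G" "G \<subseteq> insert \<psi> M"
    obtain v where "\<forall>f\<in>(G - {\<psi>}) \<union> F. cval v f"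
      using maximal_consistent[of "(G - {\<psi>}) \<union> F"] G assms(1,2) by blast
    then show "\<exists>v. \<forall>f\<in>G. cval v f" using assms(3) by blast
  qed
qed

lemma maximal_Neg: "Neg \<psi> \<in> M \<longleftrightarrow> \<psi> \<notin> M"
proof
  assume "Neg \<psi> \<in> M"
  then show "\<psi> \<notin> M" using maximal_consistent[of "{\<psi>, Neg \<psi>}"] by auto
next
  assume "\<psi> \<notin> M"
  then have "\<not> fsat (insert \<psi> M)" using maximal by blast
  then obtain F where F: "finite F" "F \<subseteq> insert \<psi> M" "\<not> (\<exists>v. \<forall>f\<in>F. cval v f)"
    unfolding fsat_def by blast
  have "\<And>v. \<forall>f\<in>F - {\<psi>}. cval v f \<Longrightarrow> cval v (Neg \<psi>)"
    using F(3) by auto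
  then show "Neg \<psi> \<in> M" using maximal_closed[of "F - {\<psi>}"] F(1,2) by blast
qed

lemma maximal_truth: "\<phi> \<in> M \<longleftrightarrow> cval (\<lambda>a. Atom a \<in> M) \<phi>"
proof (induction \<phi>)
  case (Neg p)
  then show ?case using maximal_Neg by simp
next
  case (Conj p q)
  have "Conj p q \<in> M \<longleftrightarrow> p \<in> M \<and> q \<in> M"
  proof
    assume "Conj p q \<in> M"
    then show "p \<in> M \<and> q \<in> M"
      using maximal_closed[of "{Conj p q}" p] maximal_closed[of "{Conj p q}" q] by auto
  next
    assume "p \<in> M \<and> q \<in> M"
    then show "Conj p q \<in> M" by (intro maximal_closed[of "{p, q}"]) auto
  qed
  then show ?case using Conj by simp
next
  case (Disj p q)
  have "Disj p q \<in> M \<longleftrightarrow> p \<in> M \<or> q \<in> M"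
  proof
    assume "Disj p q \<in> M"
    show "p \<in> M \<or> q \<in> M"
    proof (rule ccontr)
      assume "\<not> (p \<in> M \<or> q \<in> M)"
      then have "{Disj p q, Neg p, Neg q} \<subseteq> M" using \<open>Disj p q \<in> M\<close> maximal_Neg by auto
      then show False using maximal_consistent[of "{Disj p q, Neg p, Neg q}"] by auto
    qed
  next
    assume "p \<in> M \<or> q \<in> M"
    then show "Disj p q \<in> M"
      using maximal_closed[of "{p}" "Disj p q"] maximal_closed[of "{q}" "Disj p q"] by auto
  qed
  then show ?case using Disj by simp
next
  case (Imp p q)
  have "Imp p q \<in> M \<longleftrightarrow> (p \<in> M \<longrightarrow> q \<in> M)"
  proof
    assume "Imp p q \<in> M"
    then show "p \<in> M \<longrightarrow> q \<in> M" using maximal_closed[of "{Imp p q, p}" q] by auto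
  next
    assume "p \<in> M \<longrightarrow> q \<in> M"
    then show "Imp p q \<in> M"
      using maximal_closed[of "{q}" "Imp p q"] maximal_closed[of "{Neg p}" "Imp p q"] maximal_Neg[of p]
      by auto
  qed
  then show ?case using Imp by simp
next
  case Top
  then show ?case using maximal_closed[of "{}" Top] by simp
next
  case Bot
  then show ?case using maximal_consistent[of "{Bot}"] by auto
next
  case (Box p)
  then show ?case using maximal_consistent[of "{Box p}"] by auto
qed simp

end

theorem compactness:
  assumes "fsat X"
  shows "\<exists>v. \<forall>f\<in>X. cval v f"
proof -
  obtain M where M: "X \<subseteq> M" "fsat M" "\<And>\<psi>. fsat (insert \<psi> M) \<Longrightarrow> \<psi> \<in> M"
    using fsat_maximal_extension[OF assms] by blast
  have "f \<in> M \<longleftrightarrow> cval (\<lambda>a. Atom a \<in> M) f" for f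
    by (rule maximal_truth[OF M(2,3)])
  then show ?thesis using M(1) by blast
qed

text \<open>The form of compactness used for the right Box-rule: if every model of G satisfies
  some member of Y, then already some finite part of Y suffices.\<close>
lemma compactness_disjunctive:
  assumes "\<And>v. \<forall>g\<in>G. cval v g \<Longrightarrow> \<exists>y\<in>Y. cval v y"
  shows "\<exists>Y0. finite Y0 \<and> Y0 \<subseteq> Y \<and> (\<forall>v. (\<forall>g\<in>G. cval v g) \<longrightarrow> (\<exists>y\<in>Y0. cval v y))"
proof (rule ccontr)
  assume no_finite: "\<not> ?thesis"
  have "fsat (G \<union> Neg ` Y)"
    unfolding fsat_def
  proof (intro allI impI)
    fix F assume F: "finite F" "F \<subseteq> G \<union> Neg ` Y"
    define Y0 where "Y0 = Y \<inter> Neg -` F"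
    have "inj Neg" by (rule injI) simp
    then have "finite Y0" unfolding Y0_def using finite_vimageI[OF F(1)] by blast
    moreover have "Y0 \<subseteq> Y" unfolding Y0_def by blast
    ultimately have "\<not> (\<forall>v. (\<forall>g\<in>G. cval v g) \<longrightarrow> (\<exists>y\<in>Y0. cval v y))"
      using no_finite by blast
    then obtain v where v: "\<forall>g\<in>G. cval v g" "\<forall>y\<in>Y0. \<not> cval v y" by blast
    have "cval v f" if "f \<in> F" for f
      using that F(2) v unfolding Y0_def by auto
    then show "\<exists>v. \<forall>f\<in>F. cval v f" by blast
  qed
  then obtain v where v: "\<forall>f\<in>G \<union> Neg ` Y. cval v f" using compactness by blast
  then have "\<exists>y\<in>Y. cval v y" using assms by blast
  moreover have "\<not> cval v y" if "y \<in> Y" for y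
    using v that by force
  ultimately show False by blast
qed

section \<open>Structural properties of derivability\<close>

lemma weaken_left: "deriv \<Theta> sc ok c (\<Gamma>, \<Delta>) \<Longrightarrow> deriv \<Theta> sc ok c (\<Gamma> + A, \<Delta>)"
proof (induction A)
  case (add x A)
  then show ?case using deriv.wL[of \<Theta> sc ok c "\<Gamma> + A" \<Delta> x] by simp
qed simp

lemma weaken_right: "deriv \<Theta> sc ok c (\<Gamma>, \<Delta>) \<Longrightarrow> deriv \<Theta> sc ok c (\<Gamma>, A + \<Delta>)"
proof (induction A)
  case (add x A)
  then show ?case using deriv.wR[of \<Theta> sc ok c \<Gamma> "A + \<Delta>" x] by simp
qed simp

lemma contract_left:
  "deriv \<Theta> sc ok c (\<Gamma> + A, \<Delta>) \<Longrightarrow> deriv \<Theta> sc ok c (\<Gamma> + mset_set (set_mset A), \<Delta>)"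
proof (induction A arbitrary: \<Gamma>)
  case (add x A)
  have "deriv \<Theta> sc ok c (add_mset x \<Gamma> + A, \<Delta>)" using add.prems by simp
  then have IH: "deriv \<Theta> sc ok c (add_mset x \<Gamma> + mset_set (set_mset A), \<Delta>)"
    by (rule add.IH)
  show ?case
  proof (cases "x \<in># A")
    case True
    then obtain R where "mset_set (set_mset A) = add_mset x R"
      by (metis finite_set_mset finite_set_mset_mset_set multi_member_split)
    then show ?thesis
      using IH deriv.cL[of \<Theta> sc ok c "\<Gamma> + R" x \<Delta>] True
      by (simp add: insert_absorb)
  qed (use IH in simp)
qed simp

lemma contract_right:
  "deriv \<Theta> sc ok c (\<Gamma>, A + \<Delta>) \<Longrightarrow> deriv \<Theta> sc ok c (\<Gamma>, mset_set (set_mset A) + \<Delta>)"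
proof (induction A arbitrary: \<Delta>)
  case (add x A)
  have "deriv \<Theta> sc ok c (\<Gamma>, A + add_mset x \<Delta>)" using add.prems by simp
  then have IH: "deriv \<Theta> sc ok c (\<Gamma>, mset_set (set_mset A) + add_mset x \<Delta>)"
    by (rule add.IH)
  show ?case
  proof (cases "x \<in># A")
    case True
    then obtain R where "mset_set (set_mset A) = add_mset x R"
      by (metis finite_set_mset finite_set_mset_mset_set multi_member_split)
    then show ?thesis
      using IH deriv.cR[of \<Theta> sc ok c \<Gamma> x "R + \<Delta>"] True
      by (simp add: insert_absorb)
  qed (use IH in simp)
qed simp

lemma set_left:
  assumes "deriv \<Theta> sc ok c (\<Gamma> + A, \<Delta>)" "set_mset A \<subseteq> set_mset B"
  shows "deriv \<Theta> sc ok c (\<Gamma> + B, \<Delta>)"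
proof -
  have "mset_set (set_mset A) \<subseteq># B"
    using assms(2) by (auto simp: subseteq_mset_def count_mset_set' Suc_leI)
  then obtain R where "B = mset_set (set_mset A) + R" by (metis subset_mset.le_iff_add)
  then show ?thesis
    using weaken_left[OF contract_left[OF assms(1)], of R] by (simp add: add.assoc)
qed

lemma set_right:
  assumes "deriv \<Theta> sc ok c (\<Gamma>, A + \<Delta>)" "set_mset A \<subseteq> set_mset B"
  shows "deriv \<Theta> sc ok c (\<Gamma>, B + \<Delta>)"
proof -
  have "mset_set (set_mset A) \<subseteq># B"
    using assms(2) by (auto simp: subseteq_mset_def count_mset_set' Suc_leI)
  then obtain R where "B = mset_set (set_mset A) + R" by (metis subset_mset.le_iff_add)
  then show ?thesis
    using weaken_right[OF contract_right[OF assms(1)], of R] by (simp add: add_ac)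
qed

text \<open>The rules restated with active formulas attached by add_mset, the normal form
  produced by the simplifier, which is how the backward proof search uses them.\<close>
context
  fixes \<Theta> :: "'a crule set" and sc :: "nat \<Rightarrow> 'a sequent \<Rightarrow> bool" and ok :: "nat \<Rightarrow> bool"
    and c :: bool
begin

lemma negL': "deriv \<Theta> sc ok c (\<Gamma>, add_mset p \<Delta>) \<Longrightarrow> deriv \<Theta> sc ok c (add_mset (Neg p) \<Gamma>, \<Delta>)"
  using deriv.negL[of \<Theta> sc ok c \<Gamma> p \<Delta>] by simp

lemma conjL':
  "deriv \<Theta> sc ok c (add_mset p (add_mset q \<Gamma>), \<Delta>) \<Longrightarrow> deriv \<Theta> sc ok c (add_mset (Conj p q) \<Gamma>, \<Delta>)"
  using deriv.conjL[of \<Theta> sc ok c \<Gamma> p q \<Delta>] by simp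

lemma disjL': "deriv \<Theta> sc ok c (add_mset p \<Gamma>, \<Delta>) \<Longrightarrow> deriv \<Theta> sc ok c (add_mset q \<Gamma>, \<Delta>)
    \<Longrightarrow> deriv \<Theta> sc ok c (add_mset (Disj p q) \<Gamma>, \<Delta>)"
  using deriv.disjL[of \<Theta> sc ok c \<Gamma> p \<Delta> q] by simp

lemma impL': "deriv \<Theta> sc ok c (\<Gamma>, add_mset p \<Delta>) \<Longrightarrow> deriv \<Theta> sc ok c (add_mset q \<Gamma>, \<Delta>)
    \<Longrightarrow> deriv \<Theta> sc ok c (add_mset (Imp p q) \<Gamma>, \<Delta>)"
  using deriv.impL[of \<Theta> sc ok c \<Gamma> p \<Delta> q] by simp

lemma negR': "deriv \<Theta> sc ok c (add_mset p \<Gamma>, \<Delta>) \<Longrightarrow> deriv \<Theta> sc ok c (\<Gamma>, add_mset (Neg p) \<Delta>)"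
  using deriv.negR[of \<Theta> sc ok c \<Gamma> p \<Delta>] by simp

lemma conjR': "deriv \<Theta> sc ok c (\<Gamma>, add_mset p \<Delta>) \<Longrightarrow> deriv \<Theta> sc ok c (\<Gamma>, add_mset q \<Delta>)
    \<Longrightarrow> deriv \<Theta> sc ok c (\<Gamma>, add_mset (Conj p q) \<Delta>)"
  using deriv.conjR[of \<Theta> sc ok c \<Gamma> p \<Delta> q] by simp

lemma disjR':
  "deriv \<Theta> sc ok c (\<Gamma>, add_mset p (add_mset q \<Delta>)) \<Longrightarrow> deriv \<Theta> sc ok c (\<Gamma>, add_mset (Disj p q) \<Delta>)"
  using deriv.disjR[of \<Theta> sc ok c \<Gamma> p q \<Delta>] by simp

lemma impR':
  "deriv \<Theta> sc ok c (add_mset p \<Gamma>, add_mset q \<Delta>) \<Longrightarrow> deriv \<Theta> sc ok c (\<Gamma>, add_mset (Imp p q) \<Delta>)"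
  using deriv.impR[of \<Theta> sc ok c \<Gamma> p q \<Delta>] by simp

lemma wL': "deriv \<Theta> sc ok c (\<Gamma>, \<Delta>) \<Longrightarrow> deriv \<Theta> sc ok c (add_mset p \<Gamma>, \<Delta>)"
  using deriv.wL[of \<Theta> sc ok c \<Gamma> \<Delta> p] by simp

lemma wR': "deriv \<Theta> sc ok c (\<Gamma>, \<Delta>) \<Longrightarrow> deriv \<Theta> sc ok c (\<Gamma>, add_mset p \<Delta>)"
  using deriv.wR[of \<Theta> sc ok c \<Gamma> \<Delta> p] by simp

lemma botL': "deriv \<Theta> sc ok c (add_mset Bot \<Gamma>, \<Delta>)"
  using weaken_right[OF weaken_left[OF deriv.botL], of \<Theta> sc ok c \<Gamma> \<Delta>] by (simp add: add.commute)

lemma topR': "deriv \<Theta> sc ok c (\<Gamma>, add_mset Top \<Delta>)"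
  using weaken_right[OF weaken_left[OF deriv.topR], of \<Theta> sc ok c \<Gamma> \<Delta>] by (simp add: add.commute)

lemma ax': "deriv \<Theta> sc ok c (add_mset p \<Gamma>, add_mset p \<Delta>)"
  using weaken_right[OF weaken_left[OF deriv.ax], of \<Theta> sc ok c p \<Gamma> \<Delta>] by (simp add: add.commute)

lemma boxR': "ok (mdepth p) \<Longrightarrow> set rs \<subseteq> \<Theta> \<Longrightarrow> sc (mdepth p) (mset (map snd rs), {#p#})
    \<Longrightarrow> deriv \<Theta> sc ok c (\<Gamma>, add_mset (bigconj (map fst rs)) \<Delta>)
    \<Longrightarrow> deriv \<Theta> sc ok c (\<Gamma>, add_mset (Box p) \<Delta>)"
  using deriv.boxR[where \<Gamma>=\<Gamma> and p=p and rs=rs and \<Delta>=\<Delta>] by simp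

lemma boxL': "ok (mdepth p)
    \<Longrightarrow> (\<And>S. finite S \<Longrightarrow> S \<subseteq> \<Theta> \<Longrightarrow> sc (mdepth p) (mset_set (snd ` S), {#p#})
           \<Longrightarrow> deriv \<Theta> sc ok c (\<Gamma> + mset_set (fst ` S), \<Delta>))
    \<Longrightarrow> deriv \<Theta> sc ok c (add_mset (Box p) \<Gamma>, \<Delta>)"
  using deriv.boxL[where \<Gamma>=\<Gamma> and p=p and \<Delta>=\<Delta>] by simp

lemma boxR_list:
  assumes "\<forall>(q, rs)\<in>set L. ok (mdepth q) \<and> set rs \<subseteq> \<Theta> \<and> sc (mdepth q) (mset (map snd rs), {#q#})"
    and "deriv \<Theta> sc ok c (\<Gamma>, mset (map (\<lambda>(q, rs). bigconj (map fst rs)) L) + D)"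
  shows "deriv \<Theta> sc ok c (\<Gamma>, mset (map (\<lambda>(q, rs). Box q) L) + D)"
  using assms
proof (induction L arbitrary: D)
  case (Cons qrs L)
  obtain q rs where qrs: "qrs = (q, rs)" by fastforce
  have "deriv \<Theta> sc ok c (\<Gamma>, mset (map (\<lambda>(q, rs). bigconj (map fst rs)) L)
      + add_mset (bigconj (map fst rs)) D)"
    using Cons.prems(2) qrs by simp
  then have "deriv \<Theta> sc ok c (\<Gamma>, mset (map (\<lambda>(q, rs). Box q) L) + add_mset (bigconj (map fst rs)) D)"
    using Cons.IH[of "add_mset (bigconj (map fst rs)) D"] Cons.prems(1) by simp
  then have "deriv \<Theta> sc ok c (\<Gamma>, add_mset (Box q) (mset (map (\<lambda>(q, rs). Box q) L) + D))"
    using boxR'[of q rs] Cons.prems(1) qrs by simp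
  then show ?case using qrs by simp
qed simp

end

text \<open>The only property of the side-condition relation that the semantic argument needs:
  whether psi_1, ..., psi_k |- p holds depends only on the set of the psi_i.\<close>
definition set_based :: "(nat \<Rightarrow> 'a sequent \<Rightarrow> bool) \<Rightarrow> bool" where
  "set_based sc \<longleftrightarrow>
     (\<forall>k A B p. set_mset A = set_mset B \<longrightarrow> sc k (A, {#p#}) \<longrightarrow> sc k (B, {#p#}))"

lemma levels_derivability: "\<exists>sc ok. levels \<Theta> n k = deriv \<Theta> sc ok True"
  by (induction n) auto

text \<open>Hence, by contraction and weakening, the side conditions of S_Theta are set based.\<close>
lemma level_deriv_set_based: "set_based (level_deriv \<Theta>)"
  unfolding set_based_def
proof (intro allI impI)
  fix k A B p
  assume "set_mset A = set_mset (B :: 'a fm multiset)" "level_deriv \<Theta> k (A, {#p#})"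
  moreover obtain sc ok where "level_deriv \<Theta> k = deriv \<Theta> sc ok True"
    using levels_derivability unfolding level_deriv_def by blast
  ultimately show "level_deriv \<Theta> k (B, {#p#})"
    using set_left[of \<Theta> sc ok True "{#}" A "{#p#}" B] by simp
qed

section \<open>Semantics of Box given by the side conditions, and soundness\<close>

definition box_holds ::
  "'a crule set \<Rightarrow> (nat \<Rightarrow> 'a sequent \<Rightarrow> bool) \<Rightarrow> ('a \<Rightarrow> bool) \<Rightarrow> 'a fm \<Rightarrow> bool" where
  "box_holds \<Theta> sc v p \<longleftrightarrow>
     (\<exists>rs. set rs \<subseteq> \<Theta> \<and> sc (mdepth p) (mset (map snd rs), {#p#}) \<and> (\<forall>r\<in>set rs. cval v (fst r)))"

fun sem :: "'a crule set \<Rightarrow> (nat \<Rightarrow> 'a sequent \<Rightarrow> bool) \<Rightarrow> ('a \<Rightarrow> bool) \<Rightarrow> 'a fm \<Rightarrow> bool" where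
  "sem \<Theta> sc v (Atom a) = v a"
| "sem \<Theta> sc v (Neg p) = (\<not> sem \<Theta> sc v p)"
| "sem \<Theta> sc v (Conj p q) = (sem \<Theta> sc v p \<and> sem \<Theta> sc v q)"
| "sem \<Theta> sc v (Disj p q) = (sem \<Theta> sc v p \<or> sem \<Theta> sc v q)"
| "sem \<Theta> sc v (Imp p q) = (sem \<Theta> sc v p \<longrightarrow> sem \<Theta> sc v q)"
| "sem \<Theta> sc v Top = True"
| "sem \<Theta> sc v Bot = False"
| "sem \<Theta> sc v (Box p) = box_holds \<Theta> sc v p"

definition valid :: "'a crule set \<Rightarrow> (nat \<Rightarrow> 'a sequent \<Rightarrow> bool) \<Rightarrow> 'a sequent \<Rightarrow> bool" where
  "valid \<Theta> sc s \<longleftrightarrow> (\<forall>v. (\<forall>x\<in>#fst s. sem \<Theta> sc v x) \<longrightarrow> (\<exists>x\<in>#snd s. sem \<Theta> sc v x))"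

lemma sem_classical: "classical \<phi> \<Longrightarrow> sem \<Theta> sc v \<phi> = cval v \<phi>"
  by (induction \<phi>) auto

lemma cval_bigconj: "cval v (bigconj xs) = (\<forall>x\<in>set xs. cval v x)"
  by (induction xs rule: bigconj.induct) auto

lemma classical_bigconj: "\<forall>x\<in>set xs. classical x \<Longrightarrow> classical (bigconj xs)"
  by (induction xs rule: bigconj.induct) auto

lemma causal_premises_classical:
  "causal_theory \<Theta> \<Longrightarrow> set rs \<subseteq> \<Theta> \<Longrightarrow> classical (bigconj (map fst rs))"
  unfolding causal_theory_def by (intro classical_bigconj) force

lemma valid_classical:
  assumes "\<forall>x\<in>#\<Gamma> + \<Delta>. classical x"
  shows "valid \<Theta> sc (\<Gamma>, \<Delta>) \<longleftrightarrow> (\<forall>v. (\<forall>x\<in>#\<Gamma>. cval v x) \<longrightarrow> (\<exists>x\<in>#\<Delta>. cval v x))"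
proof -
  have "sem \<Theta> sc v x = cval v x" if "x \<in># \<Gamma>" for v x
    using assms that by (intro sem_classical) auto
  moreover have "sem \<Theta> sc v x = cval v x" if "x \<in># \<Delta>" for v x
    using assms that by (intro sem_classical) auto
  ultimately show ?thesis unfolding valid_def by simp
qed

lemma valid_boxR:
  assumes "causal_theory \<Theta>" "set rs \<subseteq> \<Theta>" "sc (mdepth p) (mset (map snd rs), {#p#})"
    and "valid \<Theta> sc (\<Gamma>, add_mset (bigconj (map fst rs)) \<Delta>)"
  shows "valid \<Theta> sc (\<Gamma>, add_mset (Box p) \<Delta>)"
proof -
  have "box_holds \<Theta> sc v p" if "sem \<Theta> sc v (bigconj (map fst rs))" for v
    using that assms(2,3) sem_classical[OF causal_premises_classical[OF assms(1,2)]]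
    unfolding box_holds_def by (auto simp: cval_bigconj)
  then show ?thesis using assms(4) unfolding valid_def by fastforce
qed

lemma valid_boxL:
  assumes "causal_theory \<Theta>" "set_based sc"
    and "\<And>S. finite S \<Longrightarrow> S \<subseteq> \<Theta> \<Longrightarrow> sc (mdepth p) (mset_set (snd ` S), {#p#})
           \<Longrightarrow> valid \<Theta> sc (\<Gamma> + mset_set (fst ` S), \<Delta>)"
  shows "valid \<Theta> sc (add_mset (Box p) \<Gamma>, \<Delta>)"
  unfolding valid_def
proof (intro allI impI)
  fix v assume hyp: "\<forall>x\<in>#fst (add_mset (Box p) \<Gamma>, \<Delta>). sem \<Theta> sc v x"
  then obtain rs where rs: "set rs \<subseteq> \<Theta>" "sc (mdepth p) (mset (map snd rs), {#p#})"
    "\<forall>r\<in>set rs. cval v (fst r)"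
    by (auto simp: box_holds_def)
  have "set_mset (mset (map snd rs)) = set_mset (mset_set (snd ` set rs))" by simp
  then have "sc (mdepth p) (mset_set (snd ` set rs), {#p#})"
    using rs(2) assms(2) unfolding set_based_def by blast
  then have "valid \<Theta> sc (\<Gamma> + mset_set (fst ` set rs), \<Delta>)" using assms(3) rs(1) by blast
  moreover have "sem \<Theta> sc v (fst r)" if "r \<in> set rs" for r
    using that rs assms(1) sem_classical unfolding causal_theory_def by fastforce
  ultimately show "\<exists>x\<in>#snd (add_mset (Box p) \<Gamma>, \<Delta>). sem \<Theta> sc v x"
    using hyp unfolding valid_def by fastforce
qed

lemma valid_mcut:
  assumes "m > 0" "valid \<Theta> sc (\<Gamma>, replicate_mset m p + \<Delta>)"
    and "valid \<Theta> sc (\<Gamma>' + replicate_mset n p, \<Delta>')"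
  shows "valid \<Theta> sc (\<Gamma> + \<Gamma>', \<Delta> + \<Delta>')"
  unfolding valid_def
proof (intro allI impI)
  fix v assume "\<forall>x\<in>#fst (\<Gamma> + \<Gamma>', \<Delta> + \<Delta>'). sem \<Theta> sc v x"
  then have left: "\<forall>x\<in>#\<Gamma>. sem \<Theta> sc v x" and right: "\<forall>x\<in>#\<Gamma>'. sem \<Theta> sc v x"
    by auto
  have "sem \<Theta> sc v p \<or> (\<exists>x\<in>#\<Delta>. sem \<Theta> sc v x)"
    using assms(1,2) left unfolding valid_def by (auto simp: in_replicate_mset)
  moreover have "\<exists>x\<in>#\<Delta>'. sem \<Theta> sc v x" if "sem \<Theta> sc v p"
    using assms(3) right that unfolding valid_def by (auto simp: in_replicate_mset)
  ultimately show "\<exists>x\<in>#snd (\<Gamma> + \<Gamma>', \<Delta> + \<Delta>'). sem \<Theta> sc v x" by auto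
qed

theorem soundness:
  assumes "causal_theory \<Theta>" "set_based sc"
  shows "deriv \<Theta> sc ok c s \<Longrightarrow> valid \<Theta> sc s"
proof (induction rule: deriv.induct)
  case (boxR p rs \<Gamma> \<Delta>)
  then show ?case using valid_boxR[OF assms(1)] by simp
next
  case (boxL p \<Gamma> \<Delta>)
  then show ?case using valid_boxL[OF assms] by simp
next
  case (mcut m n \<Gamma> p \<Delta> \<Gamma>' \<Delta>')
  then show ?case using valid_mcut by blast
qed (auto simp: valid_def)

section \<open>Completeness of the calculus without multicut\<close>

text \<open>Termination measure of the backward proof search: the number of Box symbols, and
  then the total number of symbols, of a sequent.  Propositional rules and weakening of
  constants keep the first and decrease the second; both Box-rules replace boxes by
  classical formulas and decrease the first.\<close>
fun nboxes :: "'a fm \<Rightarrow> nat" where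
  "nboxes (Atom a) = 0"
| "nboxes (Neg p) = nboxes p"
| "nboxes (Conj p q) = nboxes p + nboxes q"
| "nboxes (Disj p q) = nboxes p + nboxes q"
| "nboxes (Imp p q) = nboxes p + nboxes q"
| "nboxes Top = 0"
| "nboxes Bot = 0"
| "nboxes (Box p) = Suc (nboxes p)"

fun symbols :: "'a fm \<Rightarrow> nat" where
  "symbols (Atom a) = 1"
| "symbols (Neg p) = Suc (symbols p)"
| "symbols (Conj p q) = Suc (symbols p + symbols q)"
| "symbols (Disj p q) = Suc (symbols p + symbols q)"
| "symbols (Imp p q) = Suc (symbols p + symbols q)"
| "symbols Top = 1"
| "symbols Bot = 1"
| "symbols (Box p) = Suc (symbols p)"

lemma nboxes_classical: "classical x \<Longrightarrow> nboxes x = 0"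
  by (induction x) auto

lemma nboxes_classical_mset: "\<forall>x\<in>#M. classical x \<Longrightarrow> (\<Sum>x\<in>#M. nboxes x) = 0"
  by (induction M) (auto simp: nboxes_classical)

fun complexity :: "'a sequent \<Rightarrow> nat \<times> nat" where
  "complexity (\<Gamma>, \<Delta>) = ((\<Sum>x\<in>#\<Gamma> + \<Delta>. nboxes x), (\<Sum>x\<in>#\<Gamma> + \<Delta>. symbols x))"

definition simpler :: "('a sequent \<times> 'a sequent) set" where
  "simpler = inv_image (less_than <*lex*> less_than) complexity"

lemma wf_simpler: "wf simpler"
  unfolding simpler_def by (intro wf_inv_image wf_lex_prod wf_less_than)

lemma simpler_iff:
  "((\<Gamma>', \<Delta>'), (\<Gamma>, \<Delta>)) \<in> simpler \<longleftrightarrow>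
     (\<Sum>x\<in>#\<Gamma>' + \<Delta>'. nboxes x) < (\<Sum>x\<in>#\<Gamma> + \<Delta>. nboxes x) \<or>
     ((\<Sum>x\<in>#\<Gamma>' + \<Delta>'. nboxes x) = (\<Sum>x\<in>#\<Gamma> + \<Delta>. nboxes x) \<and>
      (\<Sum>x\<in>#\<Gamma>' + \<Delta>'. symbols x) < (\<Sum>x\<in>#\<Gamma> + \<Delta>. symbols x))"
  by (simp add: simpler_def)

fun is_connective :: "'a fm \<Rightarrow> bool" where
  "is_connective (Atom a) = False"
| "is_connective (Box p) = False"
| "is_connective _ = True"

lemma sequent_shape:
  fixes \<Gamma> \<Delta> :: "'a fm multiset"
  obtains (left_connective) x G where "\<Gamma> = add_mset x G" "is_connective x"
    | (right_connective) x D where "\<Delta> = add_mset x D" "is_connective x"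
    | (left_box) p G where "\<Gamma> = add_mset (Box p) G"
    | (right_box) q where "\<forall>x\<in>#\<Gamma>. classical x" "\<forall>x\<in>#\<Delta>. classical x \<or> (\<exists>q. x = Box q)"
        "Box q \<in># \<Delta>"
    | (atomic) "\<forall>x\<in>#\<Gamma>. \<exists>a. x = Atom a" "\<forall>x\<in>#\<Delta>. \<exists>a. x = Atom a"
proof -
  have shape: "(\<exists>a. x = Atom a) \<or> (\<exists>q. x = Box q)" if "\<not> is_connective x" for x :: "'a fm"
    using that by (cases x) auto
  consider (conn) "\<exists>x\<in>#\<Gamma> + \<Delta>. is_connective x" | (box) "\<exists>p. Box p \<in># \<Gamma>"
    | (none) "\<forall>x\<in>#\<Gamma> + \<Delta>. \<not> is_connective x" "\<forall>p. Box p \<notin># \<Gamma>"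
    by blast
  then show ?thesis
  proof cases
    case conn
    then consider x where "x \<in># \<Gamma>" "is_connective x" | x where "x \<in># \<Delta>" "is_connective x"
      by auto
    then show ?thesis
      by cases (metis left_connective multi_member_split, metis right_connective multi_member_split)
  next
    case box
    then show ?thesis using left_box by (metis multi_member_split)
  next
    case none
    have left_atoms: "\<forall>x\<in>#\<Gamma>. \<exists>a. x = Atom a"
    proof
      fix x assume "x \<in># \<Gamma>"
      then show "\<exists>a. x = Atom a" using shape[of x] none by auto
    qed
    have right_shape: "\<forall>x\<in>#\<Delta>. (\<exists>a. x = Atom a) \<or> (\<exists>q. x = Box q)"
      using shape none by auto
    show ?thesis
    proof (cases "\<exists>q. Box q \<in># \<Delta>")
      case True
      moreover have "\<forall>x\<in>#\<Gamma>. classical x" "\<forall>x\<in>#\<Delta>. classical x \<or> (\<exists>q. x = Box q)"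
        using left_atoms right_shape by auto
      ultimately show ?thesis using right_box by blast
    next
      case False
      then show ?thesis using atomic left_atoms right_shape by blast
    qed
  qed
qed

definition box_witnesses ::
  "'a crule set \<Rightarrow> (nat \<Rightarrow> 'a sequent \<Rightarrow> bool) \<Rightarrow> 'a fm multiset \<Rightarrow> ('a fm \<times> 'a crule list) set" where
  "box_witnesses \<Theta> sc \<Delta> =
     {(q, rs). Box q \<in># \<Delta> \<and> set rs \<subseteq> \<Theta> \<and> sc (mdepth q) (mset (map snd rs), {#q#})}"

definition witness_premise :: "'a fm \<times> 'a crule list \<Rightarrow> 'a fm" where
  "witness_premise = (\<lambda>(q, rs). bigconj (map fst rs))"

context
  fixes \<Theta> :: "'a crule set" and sc :: "nat \<Rightarrow> 'a sequent \<Rightarrow> bool"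
  assumes causal: "causal_theory \<Theta>" and set_based: "set_based sc"
begin

abbreviation provable :: "'a sequent \<Rightarrow> bool" where
  "provable \<equiv> deriv \<Theta> sc (\<lambda>_. True) False"

text \<open>A connective is decomposed by its (invertible) rule; the premises are valid and
  simpler.\<close>
lemma complete_left_connective:
  assumes IH: "\<And>s'. (s', (add_mset x \<Gamma>, \<Delta>)) \<in> simpler \<Longrightarrow> valid \<Theta> sc s' \<Longrightarrow> provable s'"
    and valid: "valid \<Theta> sc (add_mset x \<Gamma>, \<Delta>)" and "is_connective x"
  shows "provable (add_mset x \<Gamma>, \<Delta>)"
proof (cases x)
  case Top
  have "provable (\<Gamma>, \<Delta>)"
    by (rule IH) (use valid in \<open>auto simp: Top valid_def simpler_iff\<close>)
  then show ?thesis unfolding Top by (rule wL')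
next
  case (Neg p)
  have "provable (\<Gamma>, add_mset p \<Delta>)"
    by (rule IH) (use valid in \<open>auto simp: Neg valid_def simpler_iff\<close>)
  then show ?thesis unfolding Neg by (rule negL')
next
  case (Conj p q)
  have "provable (add_mset p (add_mset q \<Gamma>), \<Delta>)"
    by (rule IH) (use valid in \<open>auto simp: Conj valid_def simpler_iff\<close>)
  then show ?thesis unfolding Conj by (rule conjL')
next
  case (Disj p q)
  have "provable (add_mset p \<Gamma>, \<Delta>)" "provable (add_mset q \<Gamma>, \<Delta>)"
    by (rule IH; use valid in \<open>auto simp: Disj valid_def simpler_iff\<close>)+
  then show ?thesis unfolding Disj by (rule disjL')
next
  case (Imp p q)
  have "provable (\<Gamma>, add_mset p \<Delta>)" "provable (add_mset q \<Gamma>, \<Delta>)"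
    by (rule IH; use valid in \<open>auto simp: Imp valid_def simpler_iff\<close>)+
  then show ?thesis unfolding Imp by (rule impL')
qed (use botL' \<open>is_connective x\<close> in auto)

lemma complete_right_connective:
  assumes IH: "\<And>s'. (s', (\<Gamma>, add_mset x \<Delta>)) \<in> simpler \<Longrightarrow> valid \<Theta> sc s' \<Longrightarrow> provable s'"
    and valid: "valid \<Theta> sc (\<Gamma>, add_mset x \<Delta>)" and "is_connective x"
  shows "provable (\<Gamma>, add_mset x \<Delta>)"
proof (cases x)
  case Bot
  have "provable (\<Gamma>, \<Delta>)"
    by (rule IH) (use valid in \<open>auto simp: Bot valid_def simpler_iff\<close>)
  then show ?thesis unfolding Bot by (rule wR')
next
  case (Neg p)
  have "provable (add_mset p \<Gamma>, \<Delta>)"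
    by (rule IH) (use valid in \<open>auto simp: Neg valid_def simpler_iff\<close>)
  then show ?thesis unfolding Neg by (rule negR')
next
  case (Conj p q)
  have "provable (\<Gamma>, add_mset p \<Delta>)" "provable (\<Gamma>, add_mset q \<Delta>)"
    by (rule IH; use valid in \<open>auto simp: Conj valid_def simpler_iff\<close>)+
  then show ?thesis unfolding Conj by (rule conjR')
next
  case (Disj p q)
  have "provable (\<Gamma>, add_mset p (add_mset q \<Delta>))"
    by (rule IH) (use valid in \<open>auto simp: Disj valid_def simpler_iff\<close>)
  then show ?thesis unfolding Disj by (rule disjR')
next
  case (Imp p q)
  have "provable (add_mset p \<Gamma>, add_mset q \<Delta>)"
    by (rule IH) (use valid in \<open>auto simp: Imp valid_def simpler_iff\<close>)
  then show ?thesis unfolding Imp by (rule impR')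
qed (use topR' \<open>is_connective x\<close> in auto)

text \<open>Left Box-rule: Box p on the left is replaced by the (classical, hence box-free)
  premises of any finite set of causal rules whose conclusions yield p.\<close>
lemma complete_left_box:
  assumes IH: "\<And>s'. (s', (add_mset (Box p) \<Gamma>, \<Delta>)) \<in> simpler \<Longrightarrow> valid \<Theta> sc s' \<Longrightarrow> provable s'"
    and valid: "valid \<Theta> sc (add_mset (Box p) \<Gamma>, \<Delta>)"
  shows "provable (add_mset (Box p) \<Gamma>, \<Delta>)"
proof (rule boxL')
  fix S assume S: "finite S" "S \<subseteq> \<Theta>" "sc (mdepth p) (mset_set (snd ` S), {#p#})"
  have premises_classical: "\<forall>x\<in>#mset_set (fst ` S). classical x"
    using S(1,2) causal unfolding causal_theory_def by force
  show "provable (\<Gamma> + mset_set (fst ` S), \<Delta>)"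
  proof (rule IH)
    show "((\<Gamma> + mset_set (fst ` S), \<Delta>), (add_mset (Box p) \<Gamma>, \<Delta>)) \<in> simpler"
      by (simp add: simpler_iff nboxes_classical_mset[OF premises_classical])
    show "valid \<Theta> sc (\<Gamma> + mset_set (fst ` S), \<Delta>)"
      unfolding valid_def
    proof (intro allI impI)
      fix v assume hyp: "\<forall>x\<in>#fst (\<Gamma> + mset_set (fst ` S), \<Delta>). sem \<Theta> sc v x"
      obtain rs where rs: "set rs = S" using finite_list[OF S(1)] by blast
      have "set_mset (mset_set (snd ` S)) = set_mset (mset (map snd rs))" using S(1) rs by simp
      then have "sc (mdepth p) (mset (map snd rs), {#p#})"
        using S(3) set_based unfolding set_based_def by blast
      moreover have "cval v (fst r)" if "r \<in> set rs" for r
        using that hyp premises_classical sem_classical rs S(1) by fastforce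
      ultimately have "box_holds \<Theta> sc v p" unfolding box_holds_def using rs S(2) by blast
      then show "\<exists>x\<in>#snd (\<Gamma> + mset_set (fst ` S), \<Delta>). sem \<Theta> sc v x"
        using hyp valid unfolding valid_def by auto
    qed
  qed
qed simp

lemma complete_atomic:
  assumes atoms: "\<forall>x\<in>#\<Gamma>. \<exists>a. x = Atom a" "\<forall>x\<in>#\<Delta>. \<exists>a. x = Atom a"
    and valid: "valid \<Theta> sc (\<Gamma>, \<Delta>)"
  shows "provable (\<Gamma>, \<Delta>)"
proof -
  have "sem \<Theta> sc (\<lambda>a. Atom a \<in># \<Gamma>) x" if x: "x \<in># \<Gamma>" for x
  proof -
    obtain a where "x = Atom a" using atoms(1) x by blast
    then show ?thesis using x by simp
  qed
  then obtain y where y: "y \<in># \<Delta>" "sem \<Theta> sc (\<lambda>a. Atom a \<in># \<Gamma>) y"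
    using valid unfolding valid_def by fastforce
  then obtain a where a: "y = Atom a" "Atom a \<in># \<Gamma>" using atoms(2) by fastforce
  then show ?thesis
    using ax'[where p="Atom a" and \<Gamma>="\<Gamma> - {#Atom a#}" and \<Delta>="\<Delta> - {#Atom a#}"] y(1) by simp
qed

lemma witness_premise_classical: "w \<in> box_witnesses \<Theta> sc \<Delta> \<Longrightarrow> classical (witness_premise w)"
  using causal_premises_classical[OF causal]
  unfolding box_witnesses_def witness_premise_def by auto

lemma witness_cover:
  assumes classical_left: "\<forall>x\<in>#\<Gamma>. classical x"
    and boxes_right: "\<forall>x\<in>#\<Delta>. classical x \<or> (\<exists>q. x = Box q)"
    and valid: "valid \<Theta> sc (\<Gamma>, \<Delta>)" and left_true: "\<forall>g\<in>set_mset \<Gamma>. cval v g"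
  shows "\<exists>y\<in>set_mset (filter_mset classical \<Delta>) \<union> witness_premise ` box_witnesses \<Theta> sc \<Delta>. cval v y"
proof -
  have "sem \<Theta> sc v x" if "x \<in># \<Gamma>" for x
    using left_true classical_left sem_classical that by metis
  then obtain y where y: "y \<in># \<Delta>" "sem \<Theta> sc v y" using valid unfolding valid_def by fastforce
  show ?thesis
  proof (cases "classical y")
    case True
    then have "cval v y" using y(2) sem_classical by metis
    then show ?thesis using True y(1) by auto
  next
    case False
    then obtain q where q: "y = Box q" using boxes_right y(1) by blast
    then obtain rs where rs: "set rs \<subseteq> \<Theta>" "sc (mdepth q) (mset (map snd rs), {#q#})"
      "\<forall>r\<in>set rs. cval v (fst r)"
      using y(2) by (auto simp: box_holds_def)
    then have "(q, rs) \<in> box_witnesses \<Theta> sc \<Delta>" using y(1) q unfolding box_witnesses_def by simp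
    moreover have "cval v (witness_premise (q, rs))"
      using rs(3) by (simp add: witness_premise_def cval_bigconj)
    ultimately show ?thesis by blast
  qed
qed

lemma finite_box_witnesses:
  assumes classical_left: "\<forall>x\<in>#\<Gamma>. classical x"
    and boxes_right: "\<forall>x\<in>#\<Delta>. classical x \<or> (\<exists>q. x = Box q)"
    and valid: "valid \<Theta> sc (\<Gamma>, \<Delta>)"
  obtains L where "set L \<subseteq> box_witnesses \<Theta> sc \<Delta>"
    "valid \<Theta> sc (\<Gamma>, mset (map witness_premise L) + filter_mset classical \<Delta>)"
proof -
  let ?W = "box_witnesses \<Theta> sc \<Delta>"
  let ?Y = "set_mset (filter_mset classical \<Delta>) \<union> witness_premise ` ?W"
  obtain Y0 where Y0: "finite Y0" "Y0 \<subseteq> ?Y"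
    "\<forall>v. (\<forall>g\<in>set_mset \<Gamma>. cval v g) \<longrightarrow> (\<exists>y\<in>Y0. cval v y)"
    using compactness_disjunctive[of "set_mset \<Gamma>" ?Y] witness_cover[OF assms] by blast
  obtain C where C: "C \<subseteq> ?W" "finite C" "Y0 \<inter> witness_premise ` ?W = witness_premise ` C"
    using finite_subset_image[of "Y0 \<inter> witness_premise ` ?W" witness_premise ?W] Y0(1) by blast
  obtain L where L: "set L = C" using finite_list[OF C(2)] by blast
  define P where "P = mset (map witness_premise L) + filter_mset classical \<Delta>"
  have "\<forall>x\<in>#\<Gamma> + P. classical x"
    using classical_left witness_premise_classical C(1) L unfolding P_def by auto
  moreover have "\<exists>x\<in>#P. cval v x" if left_true: "\<forall>x\<in>#\<Gamma>. cval v x" for v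
  proof -
    obtain y where "y \<in> Y0" "cval v y" using Y0(3) left_true by blast
    moreover from \<open>y \<in> Y0\<close> have "y \<in># P"
      using Y0(2) C(3) L unfolding P_def by auto
    ultimately show ?thesis by blast
  qed
  ultimately have "valid \<Theta> sc (\<Gamma>, P)" using valid_classical by blast
  then show ?thesis using that[of L] C(1) L unfolding P_def by blast
qed

text \<open>Right Box-rule: once the antecedent is classical and the succedent consists of
  classical formulas and boxes (at least one), the finitely many witnesses found by
  compactness are introduced by right Box-rules on top of a box-free, hence simpler,
  valid sequent.\<close>
lemma complete_right_box:
  assumes IH: "\<And>s'. (s', (\<Gamma>, \<Delta>)) \<in> simpler \<Longrightarrow> valid \<Theta> sc s' \<Longrightarrow> provable s'"
    and classical_left: "\<forall>x\<in>#\<Gamma>. classical x"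
    and boxes_right: "\<forall>x\<in>#\<Delta>. classical x \<or> (\<exists>q. x = Box q)"
    and "Box q0 \<in># \<Delta>" and valid: "valid \<Theta> sc (\<Gamma>, \<Delta>)"
  shows "provable (\<Gamma>, \<Delta>)"
proof -
  obtain L where L: "set L \<subseteq> box_witnesses \<Theta> sc \<Delta>"
    and valid_premises: "valid \<Theta> sc (\<Gamma>, mset (map witness_premise L) + filter_mset classical \<Delta>)"
    using finite_box_witnesses[OF classical_left boxes_right valid] by blast
  let ?P = "mset (map witness_premise L) + filter_mset classical \<Delta>"
  have "\<forall>x\<in>#\<Gamma> + ?P. classical x"
    using classical_left L witness_premise_classical by auto
  then have box_free: "(\<Sum>x\<in>#\<Gamma> + ?P. nboxes x) = 0" by (rule nboxes_classical_mset)
  obtain D where "\<Delta> = add_mset (Box q0) D" using \<open>Box q0 \<in># \<Delta>\<close> by (metis multi_member_split)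
  then have "(\<Sum>x\<in>#\<Gamma> + \<Delta>. nboxes x) \<noteq> 0" by simp
  then have "((\<Gamma>, ?P), (\<Gamma>, \<Delta>)) \<in> simpler"
    unfolding simpler_iff box_free by (intro disjI1) linarith
  then have "provable (\<Gamma>, ?P)" using IH valid_premises by blast
  then have "provable (\<Gamma>, mset (map (\<lambda>(q, rs). Box q) L) + filter_mset classical \<Delta>)"
    unfolding witness_premise_def
    by (rule boxR_list[rotated]) (use L in \<open>auto simp: box_witnesses_def\<close>)
  moreover have "set_mset (mset (map (\<lambda>(q, rs). Box q) L)) \<subseteq> set_mset (filter_mset (Not \<circ> classical) \<Delta>)"
    using L by (auto simp: box_witnesses_def)
  ultimately have "provable (\<Gamma>, filter_mset (Not \<circ> classical) \<Delta> + filter_mset classical \<Delta>)"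
    by (rule set_right)
  then show ?thesis using multiset_partition[of \<Delta> classical] by (simp add: add.commute comp_def)
qed

theorem completeness: "valid \<Theta> sc s \<Longrightarrow> provable s"
proof (induction s rule: wf_induct_rule[OF wf_simpler])
  case (1 s)
  obtain \<Gamma> \<Delta> where s: "s = (\<Gamma>, \<Delta>)" by fastforce
  have IH: "\<And>s'. (s', (\<Gamma>, \<Delta>)) \<in> simpler \<Longrightarrow> valid \<Theta> sc s' \<Longrightarrow> provable s'"
    using "1.IH" s by blast
  have valid: "valid \<Theta> sc (\<Gamma>, \<Delta>)" using "1.prems" s by simp
  have "provable (\<Gamma>, \<Delta>)"
  proof (cases rule: sequent_shape[where \<Gamma>=\<Gamma> and \<Delta>=\<Delta>])
    case (left_connective x G)
    then show ?thesis using complete_left_connective[of x G \<Delta>] IH valid by simp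
  next
    case (right_connective x D)
    then show ?thesis using complete_right_connective[of \<Gamma> x D] IH valid by simp
  next
    case (left_box p G)
    then show ?thesis using complete_left_box[of p G \<Delta>] IH valid by simp
  next
    case (right_box q)
    show ?thesis by (rule complete_right_box[OF IH right_box valid])
  next
    case atomic
    show ?thesis by (rule complete_atomic[OF atomic valid])
  qed
  then show ?case using s by simp
qed

end

theorem mainTheorem7:
  fixes \<Theta> :: "'a crule set" and \<Gamma> \<Delta> :: "'a fm multiset"
  assumes "causal_theory \<Theta>"
    and "derivable \<Theta> (\<Gamma>, \<Delta>)"
  shows "cutfree_derivable \<Theta> (\<Gamma>, \<Delta>)"
proof -
  have "valid \<Theta> (level_deriv \<Theta>) (\<Gamma>, \<Delta>)"
    using assms(2) unfolding derivable_def
    by (rule soundness[OF assms(1) level_deriv_set_based])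
  then show ?thesis
    unfolding cutfree_derivable_def by (rule completeness[OF assms(1) level_deriv_set_based])
qed

end
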